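(* Let $a,c>0$ and $b,d<0$ be real numbers with $x_A<x_B$, and let $W_0(z)=1$, $W_1(z)=z$, $W_n(z)=(az+b)W_{n-1}(z)+(cz+d)W_{n-2}(z)$ for $n\ge2$. Then every $W_n(z)$ is real-rooted with $n$ distinct zeros; denoting by $R_n$ the zero set of $W_n(z)$, we have $R_n\subset(u,v)$ and $R_{n+1}$ strictly interlaces $R_n$ for every $n\ge0$. Moreover, the bound is sharp: both $u$ and $v$ are limits of zeros of $\{W_n(z)\}$.
   Context: Notation: $A(z)=az+b$, $B(z)=cz+d$, $x_A=-b/a$, $x_B=-d/c$, $\Delta_\Delta=c^2-a^2B(x_A)$, $x_\Delta^\pm=x_A+\frac{-2c\pm2\sqrt{\Delta_\Delta}}{a^2}$, $g(z)=(1-a)z^2-(b+c)z-d$, $\Delta_g=(b+c)^2+4d(1-a)$, $F=\Delta_g-\Delta_\Delta=d(a-2)^2+bc(2-a)+b^2$. The zeros of $g$ are $x_g^\pm=\frac{b+c}{2(1-a)}\pm\frac{\sqrt{\Delta_g}}{2|1-a|}$ if $a\neq1$, and $x_g^\pm=-d/(b+c)$ if $a=1$ and $b+c\ne0$. Define $(u,v)=(x_\Delta^-,x_\Delta^+)$ if $a<2$ and $F\le0$; $(u,v)=(x_g^-,x_g^+)$ if $a>2$ and $F<0$; $(u,v)=(x_g^+,x_\Delta^+)$ if $a<1$ and $F>0$; and $(u,v)=(x_g^-,x_\Delta^+)$ otherwise. For finite $X,Y\subset\mathbb{R}$ with $|X|-|Y|\in\{0,1\}$, $X$ strictly interlaces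 $Y$ if their elements can be ordered as $x_1<y_1<x_2<y_2<\cdots$. A number $z^*$ is a limit of zeros if there exist zeros $z_n$ of $W_n$ with $z_n\to z^*$. *)

theory Defs
  imports "HOL-Analysis.Analysis" "HOL-Computational_Algebra.Polynomial"
begin

fun W :: "real \<Rightarrow> real \<Rightarrow> real \<Rightarrow> real \<Rightarrow> nat \<Rightarrow> real poly" where
  "W a b c d 0 = 1"
| "W a b c d (Suc 0) = [:0, 1:]"
| "W a b c d (Suc (Suc n)) = [:b, a:] * W a b c d (Suc n) + [:d, c:] * W a b c d n"

definition xA :: "real \<Rightarrow> real \<Rightarrow> real" where "xA a b = - b / a"
definition xB :: "real \<Rightarrow> real \<Rightarrow> real" where "xB c d = - d / c"

definition DeltaDelta :: "real \<Rightarrow> real \<Rightarrow> real \<Rightarrow> real \<Rightarrow> real" where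
  "DeltaDelta a b c d = c^2 - a^2 * (c * xA a b + d)"

definition xDelta_minus :: "real \<Rightarrow> real \<Rightarrow> real \<Rightarrow> real \<Rightarrow> real" where
  "xDelta_minus a b c d = xA a b + (- 2 * c - 2 * sqrt (DeltaDelta a b c d)) / a^2"
definition xDelta_plus :: "real \<Rightarrow> real \<Rightarrow> real \<Rightarrow> real \<Rightarrow> real" where
  "xDelta_plus a b c d = xA a b + (- 2 * c + 2 * sqrt (DeltaDelta a b c d)) / a^2"

definition Delta_g :: "real \<Rightarrow> real \<Rightarrow> real \<Rightarrow> real \<Rightarrow> real" where
  "Delta_g a b c d = (b + c)^2 + 4 * d * (1 - a)"

definition Fq :: "real \<Rightarrow> real \<Rightarrow> real \<Rightarrow> real \<Rightarrow> real" where
  "Fq a b c d = Delta_g a b c d - DeltaDelta a b c d"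

definition xg_minus :: "real \<Rightarrow> real \<Rightarrow> real \<Rightarrow> real \<Rightarrow> real" where
  "xg_minus a b c d = (if a \<noteq> 1 then (b + c) / (2 * (1 - a)) - sqrt (Delta_g a b c d) / (2 * \<bar>1 - a\<bar>)
                      else - d / (b + c))"
definition xg_plus :: "real \<Rightarrow> real \<Rightarrow> real \<Rightarrow> real \<Rightarrow> real" where
  "xg_plus a b c d = (if a \<noteq> 1 then (b + c) / (2 * (1 - a)) + sqrt (Delta_g a b c d) / (2 * \<bar>1 - a\<bar>)
                      else - d / (b + c))"

definition bound_u :: "real \<Rightarrow> real \<Rightarrow> real \<Rightarrow> real \<Rightarrow> real" where
  "bound_u a b c d =
     (if a < 2 \<and> Fq a b c d \<le> 0 then xDelta_minus a b c d
      else if a > 2 \<and> Fq a b c d < 0 then xg_minus a b c d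
      else if a < 1 \<and> Fq a b c d > 0 then xg_plus a b c d
      else xg_minus a b c d)"

definition bound_v :: "real \<Rightarrow> real \<Rightarrow> real \<Rightarrow> real \<Rightarrow> real" where
  "bound_v a b c d =
     (if a < 2 \<and> Fq a b c d \<le> 0 then xDelta_plus a b c d
      else if a > 2 \<and> Fq a b c d < 0 then xg_plus a b c d
      else xDelta_plus a b c d)"

definition strictly_interlaces :: "real set \<Rightarrow> real set \<Rightarrow> bool" where
  "strictly_interlaces X Y \<longleftrightarrow> finite X \<and> finite Y \<and>
     (card X = card Y \<or> card X = card Y + 1) \<and>
     (let xs = sorted_list_of_set X; ys = sorted_list_of_set Y in
        \<forall>i < length ys. xs ! i < ys ! i \<and> (Suc i < length xs \<longrightarrow> ys ! i < xs ! Suc i))"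

definition limit_of_zeros :: "(nat \<Rightarrow> real poly) \<Rightarrow> real \<Rightarrow> bool" where
  "limit_of_zeros P zs \<longleftrightarrow>
     (\<exists>z :: nat \<Rightarrow> complex. (\<forall>\<^sub>F n in sequentially. poly (map_poly of_real (P n)) (z n) = 0)
        \<and> z \<longlonglongrightarrow> complex_of_real zs)"

end

theory Submission
  imports Defs
begin

text \<open>For fixed \<open>x\<close> the values \<open>W n x\<close> obey a second-order linear recurrence with characteristic
  equation \<open>t\<^sup>2 = A(x) t + B(x)\<close>. Call \<open>u < 0 < v\<close> barriers if \<open>(-1)^n W n u > 0\<close> and
  \<open>W n v > 0\<close> for all \<open>n\<close>, and \<open>B < 0\<close> below \<open>v\<close>. Since \<open>W (n+2) = B W n\<close> at the zeros of
  \<open>W (n+1)\<close>, the signs of \<open>W (n+2)\<close> alternate along \<open>u\<close>, the zeros of \<open>W (n+1)\<close>, \<open>v\<close>; hence by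
  induction the zeros of consecutive \<open>W n\<close> lie in \<open>(u, v)\<close>, interlace, and are as many as the
  degree allows, so all zeros are real and simple.

  The bounds \<open>u\<close>, \<open>v\<close> of the theorem are barriers: each is either a zero of the discriminant
  (\<open>x\<^sub>\<Delta>\<^sup>\<plusminus>\<close>, a double characteristic root) or a zero of \<open>g\<close> (there \<open>W 1 x = x\<close> is itself a
  characteristic root and \<open>W n x = x\<^sup>n\<close>); which one applies is decided by the sign of \<open>F\<close>, i.e. of
  \<open>g\<close> at the zero of \<open>2x - A(x)\<close>. Just inside a barrier the characteristic roots are complex, or the
  dominant root carries a negative coefficient, so some \<open>W n\<close> takes the wrong sign there and has a
  zero nearby; as the extreme zeros move outward with \<open>n\<close>, they converge to \<open>u\<close> and \<open>v\<close>.\<close>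

section \<open>Second-order linear recurrences\<close>

lemma chebyshev_rec_energy:
  fixes g :: "nat \<Rightarrow> real"
  assumes rec: "\<And>n. g (Suc (Suc n)) = t * g (Suc n) - g n"
  shows "g (Suc n)^2 - t * g (Suc n) * g n + g n^2 = g 1^2 - t * g 1 * g 0 + g 0^2"
  by (induction n) (simp_all add: rec algebra_simps power2_eq_square)

lemma chebyshev_rec_bounded:
  fixes g :: "nat \<Rightarrow> real"
  assumes rec: "\<And>n. g (Suc (Suc n)) = t * g (Suc n) - g n" and "t^2 < 4"
  shows "\<exists>K. \<forall>n. g n \<le> K"
proof -
  define E where "E = g 1^2 - t * g 1 * g 0 + g 0^2"
  have c: "1 - t^2/4 > 0" using \<open>t^2 < 4\<close> by simp
  have "g n \<le> 1 + E / (1 - t^2/4)" for n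
  proof -
    have "E = (g (Suc n) - t/2 * g n)^2 + (1 - t^2/4) * g n^2"
      using chebyshev_rec_energy[of g t, OF rec, of n] by (simp add: E_def power2_eq_square algebra_simps)
    then have "(1 - t^2/4) * g n^2 \<le> E" by (smt (verit) zero_le_power2)
    then have "g n^2 \<le> E / (1 - t^2/4)" using c by (simp add: le_divide_eq mult.commute)
    moreover have "g n \<le> 1 + g n^2" by (smt (verit) power2_eq_square zero_le_square mult_le_cancel_left1)
    ultimately show ?thesis by linarith
  qed
  then show ?thesis by blast
qed

text \<open>If \<open>g\<close> stayed nonnegative, boundedness and telescoping would make \<open>\<Sum> g\<close> converge, so
  \<open>g \<longlonglongrightarrow> 0\<close>, contradicting the positive conserved energy.\<close>
lemma chebyshev_rec_changes_sign:
  fixes g :: "nat \<Rightarrow> real"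
  assumes rec: "\<And>n. g (Suc (Suc n)) = t * g (Suc n) - g n" and g0: "g 0 = 1" and t: "t^2 < 4"
  shows "\<exists>n. g n < 0"
proof (rule ccontr)
  assume "\<not> ?thesis"
  then have nonneg: "\<And>n. g n \<ge> 0" by (simp add: not_less)
  have "t > 0"
  proof (rule ccontr)
    assume "\<not> t > 0"
    then have "t * g 1 \<le> 0" using nonneg[of 1] by (simp add: mult_nonpos_nonneg)
    then have "g 2 < 0" using rec[of 0] g0 by (simp add: numeral_2_eq_2)
    then show False using nonneg[of 2] by simp
  qed
  have "t < 2"
  proof (rule ccontr)
    assume "\<not> t < 2"
    then have "2^2 \<le> t^2" by (intro power_mono) auto
    then show False using t by simp
  qed
  obtain K where K: "\<And>n. g n \<le> K" using chebyshev_rec_bounded[of g t, OF rec t] by blast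
  have telescope: "(2 - t) * (\<Sum>k<N. g (Suc k)) = g 1 - g 0 + g N - g (Suc N)" for N
    by (induction N) (simp_all add: rec algebra_simps)
  have "(\<Sum>k<N. g (Suc k)) \<le> (g 1 - g 0 + K) / (2 - t)" for N
    using telescope[of N] K[of N] nonneg[of "Suc N"] \<open>t < 2\<close> by (simp add: le_divide_eq mult.commute)
  then have "summable (\<lambda>k. g (Suc k))" by (rule summableI_nonneg_bounded[OF nonneg])
  then have g_shift: "(\<lambda>k. g (Suc k)) \<longlonglongrightarrow> 0" by (rule summable_LIMSEQ_zero)
  then have "g \<longlonglongrightarrow> 0" by (rule LIMSEQ_imp_Suc)
  then have "(\<lambda>n. g (Suc n)^2 - t * g (Suc n) * g n + g n^2) \<longlonglongrightarrow> 0^2 - t * 0 * 0 + 0^2"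
    using g_shift by (intro tendsto_intros)
  then have "g 1^2 - t * g 1 * g 0 + g 0^2 = 0"
    unfolding chebyshev_rec_energy[of g t, OF rec] by (simp add: LIMSEQ_const_iff)
  moreover have "g 1^2 - t * g 1 * g 0 + g 0^2 = (g 1 - t/2)^2 + (1 - t^2/4)"
    using g0 by (simp add: power2_eq_square algebra_simps)
  moreover have "(g 1 - t/2)^2 \<ge> 0" by simp
  ultimately show False using t by linarith
qed

locale lin_rec =
  fixes f :: "nat \<Rightarrow> real" and \<alpha> \<beta> :: real
  assumes rec: "\<And>n. f (Suc (Suc n)) = \<alpha> * f (Suc n) + \<beta> * f n"
    and start: "f 0 = 1"
begin

text \<open>For a root \<open>\<mu>\<close> of \<open>t\<^sup>2 = \<alpha> t + \<beta>\<close> the other root is \<open>\<alpha> - \<mu>\<close>, and \<open>f (n+1) - \<mu> f n\<close>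
  is a geometric sequence in it.\<close>
lemma root_reduction:
  assumes root: "\<mu>^2 = \<alpha> * \<mu> + \<beta>"
  shows "f (Suc n) - \<mu> * f n = (\<alpha> - \<mu>)^n * (f 1 - \<mu>)"
proof (induction n)
  case 0
  then show ?case using start by simp
next
  case (Suc n)
  have \<beta>: "\<beta> = \<mu> * \<mu> - \<alpha> * \<mu>" using root by (simp add: power2_eq_square)
  have "f (Suc (Suc n)) - \<mu> * f (Suc n) = (\<alpha> - \<mu>) * (f (Suc n) - \<mu> * f n)"
    using rec[of n] unfolding \<beta> by (simp add: algebra_simps)
  then show ?case using Suc by simp
qed

lemma power_of_root:
  assumes "(f 1)^2 = \<alpha> * f 1 + \<beta>"
  shows "f n = (f 1)^n"
proof (induction n)
  case 0
  then show ?case using start by simp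
next
  case (Suc n)
  then show ?case using root_reduction[OF assms, of n] by simp
qed

lemma pos_of_root_le:
  assumes root: "\<mu>^2 = \<alpha> * \<mu> + \<beta>" and "0 < \<mu>" "\<mu> \<le> \<alpha>" "\<mu> \<le> f 1"
  shows "f n > 0"
proof (induction n)
  case 0
  then show ?case using start by simp
next
  case (Suc n)
  have "f (Suc n) \<ge> \<mu> * f n"
    using root_reduction[OF root, of n] assms(3-) by (smt (verit) mult_nonneg_nonneg zero_le_power)
  then show ?case using Suc \<open>0 < \<mu>\<close> by (smt (verit) mult_pos_pos)
qed

lemma binet:
  assumes root: "\<rho>^2 = \<alpha> * \<rho> + \<beta>"
  shows "(\<alpha> - 2 * \<rho>) * f n = (\<alpha> - \<rho>)^n * (f 1 - \<rho>) - \<rho>^n * (f 1 - (\<alpha> - \<rho>))"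
proof -
  have root': "(\<alpha> - \<rho>)^2 = \<alpha> * (\<alpha> - \<rho>) + \<beta>"
    using root by (simp add: power2_eq_square algebra_simps)
  show ?thesis
    using root_reduction[OF root, of n] root_reduction[OF root', of n] by (simp add: algebra_simps)
qed

lemma neg_of_real_roots:
  assumes discr: "\<alpha>^2 + 4 * \<beta> > 0" and "\<beta> < 0" "\<alpha> > 0"
    and below: "2 * f 1 < \<alpha>" "(f 1)^2 - \<alpha> * f 1 - \<beta> > 0"
  shows "\<exists>n. f n < 0"
proof -
  define x where "x = f 1"
  define s where "s = sqrt (\<alpha>^2 + 4 * \<beta>)"
  have s: "s > 0" "s^2 = \<alpha>^2 + 4 * \<beta>" using discr by (auto simp: s_def)
  have "s^2 < \<alpha>^2" using s \<open>\<beta> < 0\<close> by simp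
  then have s_lt: "s < \<alpha>" using \<open>\<alpha> > 0\<close> s(1) by (smt (verit) power_mono)
  have "s^2 < (\<alpha> - 2 * x)^2" using s below by (simp add: x_def power2_eq_square algebra_simps)
  then have s_lt': "s < \<alpha> - 2 * x" using below s(1) by (smt (verit) power_mono x_def)
  define \<rho> where "\<rho> = (\<alpha> - s) / 2"
  have \<rho>: "0 < \<rho>" "\<rho> < \<alpha> - \<rho>" "x < \<rho>" using s_lt s_lt' s by (auto simp: \<rho>_def field_simps)
  have root: "\<rho>^2 = \<alpha> * \<rho> + \<beta>"
    using s(2) by (simp add: \<rho>_def power2_eq_square field_simps)
  text \<open>The larger root \<open>\<alpha> - \<rho>\<close> dominates, and its coefficient \<open>x - \<rho>\<close> is negative.\<close>
  obtain n where n: "(\<rho> / (\<alpha> - \<rho>))^n < (\<rho> - x) / (\<alpha> - \<rho> - x)"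
    using real_arch_pow_inv[of "(\<rho> - x) / (\<alpha> - \<rho> - x)" "\<rho> / (\<alpha> - \<rho>)"] \<rho> by auto
  have "\<rho>^n * (\<alpha> - \<rho> - x) < (\<alpha> - \<rho>)^n * (\<rho> - x)"
    using n \<rho> by (simp add: power_divide divide_less_eq less_divide_eq mult.commute)
  then have "(\<alpha> - 2 * \<rho>) * f n < 0"
    using binet[OF root, of n] by (simp add: x_def algebra_simps)
  moreover have "\<alpha> - 2 * \<rho> > 0" using \<rho> by simp
  ultimately show ?thesis by (metis mult_less_0_iff not_less_iff_gr_or_eq)
qed

lemma neg_of_complex_roots:
  assumes discr: "\<alpha>^2 + 4 * \<beta> < 0"
  shows "\<exists>n. f n < 0"
proof -
  have "\<beta> < 0" using discr by (smt (verit) zero_le_power2)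
  define \<sigma> where "\<sigma> = sqrt (- \<beta>)"
  have \<sigma>: "\<sigma> > 0" "\<sigma>^2 = - \<beta>" using \<open>\<beta> < 0\<close> by (auto simp: \<sigma>_def)
  define g where "g n = f n / \<sigma>^n" for n
  have "g (Suc (Suc n)) = \<alpha> / \<sigma> * g (Suc n) - g n" for n
  proof -
    have "g (Suc (Suc n)) = (\<alpha> * f (Suc n) - \<sigma>^2 * f n) / \<sigma>^(Suc (Suc n))"
      by (simp add: g_def rec \<sigma>(2))
    also have "\<dots> = \<alpha> / \<sigma> * g (Suc n) - g n"
      using \<sigma>(1) by (simp add: g_def diff_divide_distrib power2_eq_square)
    finally show ?thesis .
  qed
  moreover have "(\<alpha> / \<sigma>)^2 < 4"
  proof -
    have "\<alpha>^2 / (- \<beta>) < 4" using discr \<open>\<beta> < 0\<close> by (subst pos_divide_less_eq) auto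
    then show ?thesis using \<sigma>(2) by (simp add: power_divide)
  qed
  ultimately obtain n where "g n < 0"
    using chebyshev_rec_changes_sign[of g "\<alpha> / \<sigma>"] start by (auto simp: g_def)
  then show ?thesis using \<sigma>(1) by (auto simp: g_def divide_less_0_iff)
qed

end

section \<open>Polynomials with alternating signs\<close>

lemma chain_less:
  fixes f :: "nat \<Rightarrow> 'a::order"
  assumes chain: "\<forall>i<k. f i < f (Suc i)" and "i < j" "j \<le> k"
  shows "f i < f j"
  using assms(2,3)
proof (induction j)
  case (Suc j)
  show ?case
  proof (cases "i = j")
    case False
    then have "f i < f j" using Suc by simp
    also have "f j < f (Suc j)" using chain Suc.prems by simp
    finally show ?thesis .
  qed (use chain Suc.prems in simp)
qed simp

lemma chain_le:
  fixes f :: "nat \<Rightarrow> 'a::order"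
  assumes "\<forall>i<k. f i < f (Suc i)" and "i \<le> j" "j \<le> k"
  shows "f i \<le> f j"
  using chain_less[OF assms(1)] assms(2,3) by (cases "i = j") (auto intro: less_imp_le)

lemma sorted_list_of_set_image_strict:
  fixes r :: "nat \<Rightarrow> 'a::linorder"
  assumes "\<And>i j. i < j \<Longrightarrow> j < n \<Longrightarrow> r i < r j"
  shows "sorted_list_of_set (r ` {..<n}) = map r [0..<n]"
proof -
  have "sorted_wrt (<) (map r [0..<n])" using assms by (simp add: sorted_wrt_iff_nth_less)
  moreover have "set (map r [0..<n]) = r ` {..<n}" by (simp add: atLeast0LessThan)
  ultimately show ?thesis
    by (metis sorted_list_of_set.idem_if_sorted_distinct strict_sorted_iff top_greatest list.map_ident)
qed

lemma strictly_interlaces_image: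
  fixes r s :: "nat \<Rightarrow> real"
  assumes s: "\<And>i j. i < j \<Longrightarrow> j < Suc n \<Longrightarrow> s i < s j"
    and r: "\<And>i j. i < j \<Longrightarrow> j < n \<Longrightarrow> r i < r j"
    and interlace: "\<forall>i<n. s i < r i \<and> r i < s (Suc i)"
  shows "strictly_interlaces (s ` {..<Suc n}) (r ` {..<n})"
proof -
  have "inj_on s {..<Suc n}" "inj_on r {..<n}"
    using s r by (auto simp: inj_on_def) (metis linorder_neqE_nat less_irrefl)+
  then have "card (s ` {..<Suc n}) = Suc n" "card (r ` {..<n}) = n" by (simp_all add: card_image)
  moreover have "sorted_list_of_set (s ` {..<Suc n}) = map s [0..<Suc n]"
    using s by (rule sorted_list_of_set_image_strict)
  moreover have "sorted_list_of_set (r ` {..<n}) = map r [0..<n]"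
    using r by (rule sorted_list_of_set_image_strict)
  ultimately show ?thesis
    unfolding strictly_interlaces_def Let_def
    using interlace by (auto simp: nth_append) (metis Suc_lessI)
qed

lemma poly_map_poly_of_real:
  "poly (map_poly of_real p) (of_real x) = (of_real (poly p x) :: 'a::{real_algebra_1,comm_semiring_0})"
  by (induction p) (auto simp: map_poly_pCons)

lemma real_if_card_roots_eq_degree:
  fixes p :: "real poly" and z :: complex
  assumes "p \<noteq> 0" and card: "card {x. poly p x = 0} = degree p"
    and root: "poly (map_poly of_real p) z = 0"
  shows "z \<in> \<real>"
proof (rule ccontr)
  assume z: "z \<notin> \<real>"
  define Q where "Q = (map_poly of_real p :: complex poly)"
  define R where "R = (of_real :: real \<Rightarrow> complex) ` {x. poly p x = 0}"
  have "Q \<noteq> 0" using \<open>p \<noteq> 0\<close> by (simp add: Q_def map_poly_eq_0_iff)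
  have "finite R" using poly_roots_finite[OF \<open>p \<noteq> 0\<close>] by (simp add: R_def)
  have "card R = degree p" unfolding R_def using card by (simp add: card_image inj_on_def)
  have "insert z R \<subseteq> {x. poly Q x = 0}"
    using root by (auto simp: R_def Q_def poly_map_poly_of_real)
  then have "card (insert z R) \<le> card {x. poly Q x = 0}"
    using poly_roots_finite[OF \<open>Q \<noteq> 0\<close>] by (rule card_mono[rotated])
  also have "\<dots> \<le> degree p" using card_poly_roots_bound[OF \<open>Q \<noteq> 0\<close>] by (simp add: Q_def degree_map_poly)
  finally have "card (insert z R) \<le> degree p" .
  moreover have "z \<notin> R" using z by (auto simp: R_def)
  ultimately show False
    using \<open>finite R\<close> \<open>card R = degree p\<close> by simp
qed

lemma neg_prod_of_opposite_signs:
  fixes x p q :: real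
  assumes "x * p < 0" "x * q > 0" shows "p * q < 0"
proof -
  have "(x * x) * (p * q) < 0" using mult_neg_pos[OF assms] by (simp add: ac_simps)
  then show ?thesis by (metis mult_less_0_iff not_square_less_zero)
qed

lemma poly_sign_persists:
  fixes p :: "real poly"
  assumes sign: "\<sigma> * poly p s > 0" and no_root: "\<And>y. min s t \<le> y \<Longrightarrow> y \<le> max s t \<Longrightarrow> poly p y \<noteq> 0"
  shows "\<sigma> * poly p t > 0"
proof (rule ccontr)
  assume "\<not> ?thesis"
  moreover have "poly p t \<noteq> 0" "\<sigma> \<noteq> 0" using no_root[of t] sign by auto
  ultimately have "\<sigma> * poly p t < 0" by (simp add: not_less order.order_iff_strict)
  then have neg: "poly p s * poly p t < 0" using sign neg_prod_of_opposite_signs by (metis mult.commute)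
  then consider "s < t" | "t < s" by (metis linorder_neqE_linordered_idom not_square_less_zero)
  then obtain y where "min s t < y" "y < max s t" "poly p y = 0"
  proof cases
    case 1 then show ?thesis using poly_IVT[OF 1 neg] that by auto
  next
    case 2 then show ?thesis using poly_IVT[OF 2] neg that by (auto simp: mult.commute)
  qed
  then show False using no_root[of y] by simp
qed

definition frame :: "real \<Rightarrow> real \<Rightarrow> nat \<Rightarrow> (nat \<Rightarrow> real) \<Rightarrow> nat \<Rightarrow> real" where
  "frame lo hi n r i = (if i = 0 then lo else if i \<le> n then r (i - 1) else hi)"

text \<open>The zeros of \<open>p\<close> are \<open>lo < r 0 < \<dots> < r (n - 1) < hi\<close>, all simple: the sign of \<open>p\<close> on the
  \<open>i\<close>-th gap is \<open>(-1)^(n - i)\<close>.\<close>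
definition alternating_zeros :: "real poly \<Rightarrow> real \<Rightarrow> real \<Rightarrow> nat \<Rightarrow> (nat \<Rightarrow> real) \<Rightarrow> bool" where
  "alternating_zeros p lo hi n r \<longleftrightarrow>
     (\<forall>i<Suc n. frame lo hi n r i < frame lo hi n r (Suc i)) \<and>
     {x. poly p x = 0} = r ` {..<n} \<and>
     (\<forall>i\<le>n. \<forall>t. frame lo hi n r i < t \<longrightarrow> t < frame lo hi n r (Suc i) \<longrightarrow> (-1)^(n - i) * poly p t > 0)"

lemma frame_gap_free:
  assumes chain: "\<forall>i<Suc n. frame lo hi n r i < frame lo hi n r (Suc i)" and "k < n" "i \<le> n"
  shows "\<not> (frame lo hi n r i < r k \<and> r k < frame lo hi n r (Suc i))"
proof -
  have rk: "r k = frame lo hi n r (Suc k)" using \<open>k < n\<close> by (simp add: frame_def)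
  show ?thesis
  proof (cases "k < i")
    case True
    then show ?thesis unfolding rk using chain_le[OF chain, of "Suc k" i] \<open>i \<le> n\<close> by simp
  next
    case False
    then show ?thesis unfolding rk using chain_le[OF chain, of "Suc i" "Suc k"] \<open>k < n\<close> by simp
  qed
qed

lemma frame_interlace:
  assumes "\<forall>i<n. s i < r i \<and> r i < s (Suc i)" and "i \<le> n" "lo < s i" "s i < hi"
  shows "frame lo hi n r i < s i \<and> s i < frame lo hi n r (Suc i)"
proof
  show "frame lo hi n r i < s i"
  proof (cases i)
    case (Suc k)
    then show ?thesis using assms(1,2) by (simp add: frame_def)
  qed (use assms(3) in \<open>simp add: frame_def\<close>)
  show "s i < frame lo hi n r (Suc i)" using assms by (auto simp: frame_def)
qed

context
  fixes p lo hi n r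
  assumes az: "alternating_zeros p lo hi n r"
begin

lemma alternating_zeros_chain: "\<forall>i<Suc n. frame lo hi n r i < frame lo hi n r (Suc i)"
  using az by (simp add: alternating_zeros_def)

lemma alternating_zeros_roots: "{x. poly p x = 0} = r ` {..<n}"
  using az by (simp add: alternating_zeros_def)

lemma alternating_zeros_sign:
  "i \<le> n \<Longrightarrow> frame lo hi n r i < t \<Longrightarrow> t < frame lo hi n r (Suc i) \<Longrightarrow> (-1)^(n - i) * poly p t > 0"
  using az by (simp add: alternating_zeros_def)

lemma alternating_zeros_less: "i < j \<Longrightarrow> j < n \<Longrightarrow> r i < r j"
  using chain_less[OF alternating_zeros_chain, of "Suc i" "Suc j"] by (simp add: frame_def)

lemma alternating_zeros_bounds: "i < n \<Longrightarrow> lo < r i \<and> r i < hi"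
  using chain_less[OF alternating_zeros_chain, of 0 "Suc i"] chain_less[OF alternating_zeros_chain, of "Suc i" "Suc n"]
  by (simp add: frame_def)

lemma alternating_zeros_card: "card {x. poly p x = 0} = n"
proof -
  have "inj_on r {..<n}"
    using alternating_zeros_less by (auto simp: inj_on_def) (metis linorder_neqE_nat less_irrefl)
  then show ?thesis by (simp add: alternating_zeros_roots card_image)
qed

end

lemma zeros_between_sign_changes:
  fixes p :: "real poly" and e :: "nat \<Rightarrow> real"
  assumes incr: "\<forall>j<m. e j < e (Suc j)" and sign: "\<And>j. j \<le> m \<Longrightarrow> (-1)^(m - j) * poly p (e j) > 0"
  obtains q where "\<forall>j<m. e j < q j \<and> q j < e (Suc j) \<and> poly p (q j) = 0"
proof -
  have "\<forall>j\<in>{..<m}. \<exists>z. e j < z \<and> z < e (Suc j) \<and> poly p z = 0"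
  proof
    fix j assume "j \<in> {..<m}"
    then have "j < m" by simp
    have "m - j = Suc (m - Suc j)" using \<open>j < m\<close> by simp
    then have "(-1)^(m - Suc j) * poly p (e j) < 0" using sign[of j] \<open>j < m\<close> by simp
    moreover have "(-1)^(m - Suc j) * poly p (e (Suc j)) > 0" using sign \<open>j < m\<close> by simp
    ultimately have "poly p (e j) * poly p (e (Suc j)) < 0" by (rule neg_prod_of_opposite_signs)
    then show "\<exists>z. e j < z \<and> z < e (Suc j) \<and> poly p z = 0" using poly_IVT incr \<open>j < m\<close> by blast
  qed
  from bchoice[OF this] obtain q where "\<forall>j\<in>{..<m}. e j < q j \<and> q j < e (Suc j) \<and> poly p (q j) = 0"
    by blast
  then show ?thesis by (intro that[of q]) simp
qed

lemma frame_between: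
  assumes "0 < m" and q: "\<forall>j<m. e j < q j \<and> q j < e (Suc j)"
  shows "\<forall>i<Suc m. frame (e 0) (e m) m q i < frame (e 0) (e m) m q (Suc i)"
    and "j \<le> m \<Longrightarrow> frame (e 0) (e m) m q j \<le> e j \<and> e j \<le> frame (e 0) (e m) m q (Suc j)"
proof -
  show "frame (e 0) (e m) m q j \<le> e j \<and> e j \<le> frame (e 0) (e m) m q (Suc j)" if "j \<le> m"
  proof
    show "frame (e 0) (e m) m q j \<le> e j"
    proof (cases j)
      case (Suc k)
      then show ?thesis using q that by (simp add: frame_def less_imp_le)
    qed (simp add: frame_def)
    show "e j \<le> frame (e 0) (e m) m q (Suc j)"
      using q that by (cases "j = m") (simp_all add: frame_def less_imp_le)
  qed
  show "\<forall>i<Suc m. frame (e 0) (e m) m q i < frame (e 0) (e m) m q (Suc i)"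
  proof (intro allI impI)
    fix i assume "i < Suc m"
    then consider "i = 0" | "0 < i" "i < m" | "i = m" by linarith
    then show "frame (e 0) (e m) m q i < frame (e 0) (e m) m q (Suc i)"
    proof cases
      case 1 then show ?thesis using q \<open>0 < m\<close> by (simp add: frame_def)
    next
      case 2
      then obtain k where k: "i = Suc k" by (cases i) auto
      then have "q k < e i" "e i < q i" using q 2 by auto
      then show ?thesis using k 2 by (simp add: frame_def)
    next
      case 3
      then obtain k where "i = Suc k" using \<open>0 < m\<close> by (cases i) auto
      then show ?thesis using q 3 by (simp add: frame_def)
    qed
  qed
qed

lemma roots_eq_image_if_card:
  fixes p :: "real poly"
  assumes "p \<noteq> 0" "degree p \<le> m" "inj_on q {..<m}" "q ` {..<m} \<subseteq> {x. poly p x = 0}"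
  shows "{x. poly p x = 0} = q ` {..<m}"
proof (rule card_subset_eq[symmetric])
  show "finite {x. poly p x = 0}" using poly_roots_finite[OF \<open>p \<noteq> 0\<close>] .
  then show "card (q ` {..<m}) = card {x. poly p x = 0}"
    using card_poly_roots_bound[OF \<open>p \<noteq> 0\<close>] card_mono[OF _ assms(4)] assms(2,3) by (simp add: card_image)
qed fact

lemma alternating_zeros_of_sign_changes:
  fixes p :: "real poly" and e :: "nat \<Rightarrow> real"
  assumes "0 < m" and deg: "degree p \<le> m" and incr: "\<forall>j<m. e j < e (Suc j)"
    and sign: "\<And>j. j \<le> m \<Longrightarrow> (-1)^(m - j) * poly p (e j) > 0"
  obtains q where "alternating_zeros p (e 0) (e m) m q" "\<forall>j<m. e j < q j \<and> q j < e (Suc j)"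
proof -
  have "p \<noteq> 0" using sign[of m] by auto
  obtain q where q: "\<forall>j<m. e j < q j \<and> q j < e (Suc j) \<and> poly p (q j) = 0"
    using zeros_between_sign_changes[OF incr sign] by blast
  define fr where "fr = frame (e 0) (e m) m q"
  have chain: "\<forall>i<Suc m. fr i < fr (Suc i)" and fr_e: "\<And>j. j \<le> m \<Longrightarrow> fr j \<le> e j \<and> e j \<le> fr (Suc j)"
    using frame_between[OF \<open>0 < m\<close>] q unfolding fr_def by auto
  have "q i < q j" if "i < j" "j < m" for i j
    using chain_less[OF chain, of "Suc i" "Suc j"] that by (simp add: fr_def frame_def)
  then have "inj_on q {..<m}" by (auto simp: inj_on_def) (metis linorder_neqE_nat less_irrefl)
  moreover have "q ` {..<m} \<subseteq> {x. poly p x = 0}" using q by auto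
  ultimately have roots: "{x. poly p x = 0} = q ` {..<m}"
    by (rule roots_eq_image_if_card[OF \<open>p \<noteq> 0\<close> deg])
  have "(-1)^(m - i) * poly p t > 0" if "i \<le> m" and t: "fr i < t" "t < fr (Suc i)" for i t
  proof (rule poly_sign_persists[OF sign[OF \<open>i \<le> m\<close>]])
    fix y assume "min (e i) t \<le> y" "y \<le> max (e i) t"
    then consider "y = e i" | "fr i < y" "y < fr (Suc i)" using fr_e[OF \<open>i \<le> m\<close>] t by fastforce
    then show "poly p y \<noteq> 0"
    proof cases
      case 1 then show ?thesis using sign[OF \<open>i \<le> m\<close>] by auto
    next
      case 2
      show ?thesis
      proof
        assume "poly p y = 0"
        then obtain k where "k < m" "y = q k" using roots by auto
        then show False using 2 frame_gap_free[OF chain[unfolded fr_def] _ \<open>i \<le> m\<close>] by (auto simp: fr_def)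
      qed
    qed
  qed
  then have "alternating_zeros p (e 0) (e m) m q"
    using chain roots by (simp add: alternating_zeros_def fr_def)
  with q that show ?thesis by blast
qed

section \<open>Interlacing zeros between barriers\<close>

lemma poly_W_Suc_Suc:
  "poly (W a b c d (Suc (Suc n))) x = (a*x + b) * poly (W a b c d (Suc n)) x + (c*x + d) * poly (W a b c d n) x"
  by (simp add: algebra_simps)

lemma degree_linear_le: "degree [:q, p:] \<le> 1"
  by (cases "p = 0") auto

lemma degree_W_le: "degree (W a b c d n) \<le> n"
proof (induction a b c d n rule: W.induct)
  case (3 a b c d n)
  have "degree ([:b, a:] * W a b c d (Suc n)) \<le> 1 + Suc n"
    using degree_mult_le[of "[:b, a:]"] degree_linear_le[of b a] 3(1) by (meson add_mono order_trans)
  moreover have "degree ([:d, c:] * W a b c d n) \<le> 1 + n"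
    using degree_mult_le[of "[:d, c:]"] degree_linear_le[of d c] 3(2) by (meson add_mono order_trans)
  ultimately show ?case by (simp add: degree_add_le)
qed simp_all

locale W_barriers =
  fixes a b c d u v :: real
  assumes u_neg: "u < 0" and v_pos: "0 < v"
    and B_neg: "\<And>x. x < v \<Longrightarrow> c*x + d < 0"
    and W_pos_v: "\<And>n. poly (W a b c d n) v > 0"
    and W_alt_u: "\<And>n. (-1)^n * poly (W a b c d n) u > 0"
begin

abbreviation P where "P \<equiv> W a b c d"

lemma W_nonzero: "P n \<noteq> 0"
  using W_pos_v[of n] by auto

lemma sign_at_zeros_Suc:
  assumes az_n: "alternating_zeros (P n) u v n r"
    and az_Suc: "alternating_zeros (P (Suc n)) u v (Suc n) s"
    and interlace: "\<forall>i<n. s i < r i \<and> r i < s (Suc i)" and "i \<le> n"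
  shows "(-1)^(Suc (n - i)) * poly (P (Suc (Suc n))) (s i) > 0"
proof -
  have "s i \<in> {x. poly (P (Suc n)) x = 0}"
    unfolding alternating_zeros_roots[OF az_Suc] using \<open>i \<le> n\<close> by simp
  then have root: "poly (P (Suc n)) (s i) = 0" by simp
  have bounds: "u < s i \<and> s i < v" using alternating_zeros_bounds[OF az_Suc] \<open>i \<le> n\<close> by simp
  then have sign_n: "(-1)^(n - i) * poly (P n) (s i) > 0"
    using frame_interlace[OF interlace \<open>i \<le> n\<close>]
    by (intro alternating_zeros_sign[OF az_n \<open>i \<le> n\<close>]) simp_all
  have "(-1)^(Suc (n - i)) * poly (P (Suc (Suc n))) (s i)
      = - (c * s i + d) * ((-1)^(n - i) * poly (P n) (s i))"
    using poly_W_Suc_Suc[of a b c d n "s i"] root by (simp add: algebra_simps)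
  then show ?thesis using B_neg[of "s i"] bounds sign_n by simp
qed

lemma alternating_zeros_step:
  assumes az_n: "alternating_zeros (P n) u v n r"
    and az_Suc: "alternating_zeros (P (Suc n)) u v (Suc n) s"
    and interlace: "\<forall>i<n. s i < r i \<and> r i < s (Suc i)"
  obtains q where "alternating_zeros (P (Suc (Suc n))) u v (Suc (Suc n)) q"
    "\<forall>i<Suc n. q i < s i \<and> s i < q (Suc i)"
proof -
  define m where "m = Suc (Suc n)"
  define e where "e = frame u v (Suc n) s"
  have incr: "\<forall>j<m. e j < e (Suc j)"
    using alternating_zeros_chain[OF az_Suc] by (simp add: e_def m_def)
  have e_ends: "e 0 = u" "e m = v" by (simp_all add: e_def m_def frame_def)
  have sign: "(-1)^(m - j) * poly (P m) (e j) > 0" if "j \<le> m" for j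
  proof -
    consider "j = 0" | "j = m" | i where "i \<le> n" "j = Suc i"
      using \<open>j \<le> m\<close> by (cases j) (auto simp: m_def le_Suc_eq)
    then show ?thesis
    proof cases
      case 3
      then show ?thesis
        using sign_at_zeros_Suc[OF az_n az_Suc interlace] by (simp add: m_def e_def frame_def Suc_diff_le)
    qed (use W_alt_u W_pos_v e_ends in simp_all)
  qed
  obtain q where az: "alternating_zeros (P m) (e 0) (e m) m q"
    and q: "\<forall>j<m. e j < q j \<and> q j < e (Suc j)"
    using alternating_zeros_of_sign_changes[OF _ degree_W_le incr sign] by (auto simp: m_def)
  have "\<forall>i<Suc n. q i < s i \<and> s i < q (Suc i)"
  proof (intro allI impI)
    fix i assume "i < Suc n"
    then have "q i < e (Suc i)" "e (Suc i) < q (Suc i)" using q by (simp_all add: m_def)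
    moreover have "e (Suc i) = s i" using \<open>i < Suc n\<close> by (simp add: e_def frame_def)
    ultimately show "q i < s i \<and> s i < q (Suc i)" by simp
  qed
  with az show ?thesis using e_ends that by (simp add: m_def)
qed

lemma W_alternating_zeros:
  "\<exists>r s. alternating_zeros (P n) u v n r \<and> alternating_zeros (P (Suc n)) u v (Suc n) s
     \<and> (\<forall>i<n. s i < r i \<and> r i < s (Suc i))"
proof (induction n)
  case 0
  have "alternating_zeros (P 0) u v 0 (\<lambda>_. 0)"
    using u_neg v_pos by (simp add: alternating_zeros_def frame_def)
  moreover have "alternating_zeros (P 1) u v 1 (\<lambda>_. 0)"
    using u_neg v_pos by (auto simp: alternating_zeros_def frame_def le_Suc_eq)
  ultimately show ?case by auto
next
  case (Suc n)
  then show ?case using alternating_zeros_step by metis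
qed

theorem W_real_rooted_interlacing:
  "(\<forall>z::complex. poly (map_poly of_real (P n)) z = 0 \<longrightarrow> z \<in> \<real>)
   \<and> P n \<noteq> 0 \<and> degree (P n) = n
   \<and> card {x. poly (P n) x = 0} = n
   \<and> {x. poly (P n) x = 0} \<subseteq> {u <..< v}
   \<and> strictly_interlaces {x. poly (P (Suc n)) x = 0} {x. poly (P n) x = 0}"
proof -
  obtain r s where az_n: "alternating_zeros (P n) u v n r"
    and az_Suc: "alternating_zeros (P (Suc n)) u v (Suc n) s"
    and interlace: "\<forall>i<n. s i < r i \<and> r i < s (Suc i)"
    using W_alternating_zeros by blast
  have card: "card {x. poly (P n) x = 0} = n" by (rule alternating_zeros_card[OF az_n])
  have degree: "degree (P n) = n"
    using card_poly_roots_bound[OF W_nonzero[of n]] degree_W_le[of a b c d n] card by simp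
  have "strictly_interlaces (s ` {..<Suc n}) (r ` {..<n})"
    using alternating_zeros_less[OF az_Suc] alternating_zeros_less[OF az_n] interlace
    by (rule strictly_interlaces_image)
  then show ?thesis
    using real_if_card_roots_eq_degree[OF W_nonzero, of n] card degree W_nonzero
      alternating_zeros_bounds[OF az_n] alternating_zeros_roots[OF az_n] alternating_zeros_roots[OF az_Suc]
    by auto
qed

lemma zeros_finite: "finite {x. poly (P n) x = 0}"
  using poly_roots_finite[OF W_nonzero] .

lemma zeros_nonempty: "0 < n \<Longrightarrow> {x. poly (P n) x = 0} \<noteq> {}"
  using W_real_rooted_interlacing[of n] by auto

lemma zeros_between: "poly (P n) x = 0 \<Longrightarrow> u < x \<and> x < v"
  using W_real_rooted_interlacing[of n] by auto

definition max_zero :: "nat \<Rightarrow> real" where "max_zero n = Max {x. poly (P n) x = 0}"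
definition min_zero :: "nat \<Rightarrow> real" where "min_zero n = Min {x. poly (P n) x = 0}"

lemma max_zero: "0 < n \<Longrightarrow> poly (P n) (max_zero n) = 0"
  unfolding max_zero_def using Max_in[OF zeros_finite zeros_nonempty] by auto

lemma min_zero: "0 < n \<Longrightarrow> poly (P n) (min_zero n) = 0"
  unfolding min_zero_def using Min_in[OF zeros_finite zeros_nonempty] by auto

lemma max_zero_ge: "poly (P n) x = 0 \<Longrightarrow> x \<le> max_zero n"
  unfolding max_zero_def using Max_ge[OF zeros_finite] by auto

lemma min_zero_le: "poly (P n) x = 0 \<Longrightarrow> min_zero n \<le> x"
  unfolding min_zero_def using Min_le[OF zeros_finite] by auto

lemma extreme_zeros_Suc:
  assumes "0 < n"
  shows "max_zero n \<le> max_zero (Suc n) \<and> min_zero (Suc n) \<le> min_zero n"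
proof -
  obtain r s where az_n: "alternating_zeros (P n) u v n r"
    and az_Suc: "alternating_zeros (P (Suc n)) u v (Suc n) s"
    and interlace: "\<forall>i<n. s i < r i \<and> r i < s (Suc i)"
    using W_alternating_zeros by blast
  note roots = alternating_zeros_roots[OF az_n] alternating_zeros_roots[OF az_Suc]
  note r_less = alternating_zeros_less[OF az_n]
  have "max_zero n \<in> r ` {..<n}" "min_zero n \<in> r ` {..<n}"
    using max_zero[OF assms] min_zero[OF assms] roots(1) by blast+
  then obtain k l where k: "k < n" "max_zero n = r k" and l: "l < n" "min_zero n = r l" by auto
  have "r k \<le> r (n - 1)" using r_less[of k "n - 1"] k by (cases "k = n - 1") (auto intro: less_imp_le)
  also have "r (n - 1) < s n" using interlace[rule_format, of "n - 1"] assms by simp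
  also have "s n \<le> max_zero (Suc n)" using roots(2) by (auto intro: max_zero_ge)
  finally have "max_zero n \<le> max_zero (Suc n)" using k by simp
  have "min_zero (Suc n) \<le> s 0" using roots(2) by (auto intro: min_zero_le)
  also have "s 0 < r 0" using interlace assms by simp
  also have "r 0 \<le> r l" using r_less[of 0 l] l by (cases "l = 0") (auto intro: less_imp_le)
  finally show ?thesis using l \<open>max_zero n \<le> max_zero (Suc n)\<close> by simp
qed

lemma extreme_zeros_mono:
  assumes "0 < m" "m \<le> n"
  shows "max_zero m \<le> max_zero n \<and> min_zero n \<le> min_zero m"
  using assms(2)
proof (induction n rule: dec_induct)
  case (step n)
  then show ?case using extreme_zeros_Suc[of n] assms(1) by fastforce
qed simp

text \<open>Sign failures arbitrarily close to \<open>v\<close> produce zeros there, and the largest zero only grows.\<close>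
lemma limit_of_zeros_v:
  assumes close: "\<And>\<epsilon>. \<epsilon> > 0 \<Longrightarrow> \<exists>x n. v - \<epsilon> < x \<and> x < v \<and> poly (P n) x < 0"
  shows "limit_of_zeros P v"
proof -
  have "max_zero \<longlonglongrightarrow> v"
  proof (rule LIMSEQ_I)
    fix \<epsilon> :: real assume "\<epsilon> > 0"
    obtain x n where x: "v - \<epsilon> < x" "x < v" "poly (P n) x < 0" using close[OF \<open>\<epsilon> > 0\<close>] by blast
    have "0 < n" using x(3) by (cases n) auto
    obtain y where y: "x < y" "poly (P n) y = 0" using poly_IVT_pos[OF x(2,3) W_pos_v] by blast
    show "\<exists>N. \<forall>k\<ge>N. norm (max_zero k - v) < \<epsilon>"
    proof (intro exI allI impI)
      fix k assume "n \<le> k"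
      have "x < max_zero k"
        using y max_zero_ge[OF y(2)] extreme_zeros_mono[OF \<open>0 < n\<close> \<open>n \<le> k\<close>] by simp
      moreover have "max_zero k < v" using zeros_between[OF max_zero] \<open>0 < n\<close> \<open>n \<le> k\<close> by simp
      ultimately show "norm (max_zero k - v) < \<epsilon>" using x by simp
    qed
  qed
  moreover have "\<forall>\<^sub>F n in sequentially. poly (map_poly of_real (P n)) (complex_of_real (max_zero n)) = 0"
    unfolding eventually_sequentially using max_zero by (intro exI[of _ 1]) (simp add: poly_map_poly_of_real)
  ultimately show ?thesis unfolding limit_of_zeros_def
    by (intro exI[of _ "\<lambda>n. complex_of_real (max_zero n)"]) (simp add: tendsto_of_real)
qed

lemma limit_of_zeros_u:
  assumes close: "\<And>\<epsilon>. \<epsilon> > 0 \<Longrightarrow> \<exists>x n. u < x \<and> x < u + \<epsilon> \<and> (-1)^n * poly (P n) x < 0"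
  shows "limit_of_zeros P u"
proof -
  have "min_zero \<longlonglongrightarrow> u"
  proof (rule LIMSEQ_I)
    fix \<epsilon> :: real assume "\<epsilon> > 0"
    obtain x n where x: "u < x" "x < u + \<epsilon>" "(-1)^n * poly (P n) x < 0" using close[OF \<open>\<epsilon> > 0\<close>] by blast
    have "0 < n" using x(3) by (cases n) auto
    have "poly (P n) u * poly (P n) x < 0"
      using neg_prod_of_opposite_signs[OF x(3) W_alt_u] by (simp add: mult.commute)
    then obtain y where y: "y < x" "poly (P n) y = 0" using poly_IVT[OF x(1)] by blast
    show "\<exists>N. \<forall>k\<ge>N. norm (min_zero k - u) < \<epsilon>"
    proof (intro exI allI impI)
      fix k assume "n \<le> k"
      have "min_zero k < x"
        using y min_zero_le[OF y(2)] extreme_zeros_mono[OF \<open>0 < n\<close> \<open>n \<le> k\<close>] by simp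
      moreover have "u < min_zero k" using zeros_between[OF min_zero] \<open>0 < n\<close> \<open>n \<le> k\<close> by simp
      ultimately show "norm (min_zero k - u) < \<epsilon>" using x by simp
    qed
  qed
  moreover have "\<forall>\<^sub>F n in sequentially. poly (map_poly of_real (P n)) (complex_of_real (min_zero n)) = 0"
    unfolding eventually_sequentially using min_zero by (intro exI[of _ 1]) (simp add: poly_map_poly_of_real)
  ultimately show ?thesis unfolding limit_of_zeros_def
    by (intro exI[of _ "\<lambda>n. complex_of_real (min_zero n)"]) (simp add: tendsto_of_real)
qed

end

section \<open>The recurrence at a fixed point\<close>

text \<open>At a fixed \<open>x\<close>, \<open>n \<mapsto> W n x\<close> solves the linear recurrence with characteristic equation
  \<open>t\<^sup>2 = A(x) t + B(x)\<close>. Its discriminant is \<open>disc x\<close>, \<open>g x\<close> is the characteristic polynomial at the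
  initial value \<open>W 1 x = x\<close>, and \<open>h x\<close> is twice the distance from \<open>x\<close> to the mean \<open>A(x)/2\<close> of the roots.\<close>
locale W_coeffs =
  fixes a b c d :: real
begin

definition disc :: "real \<Rightarrow> real" where "disc x = (a*x + b)^2 + 4*(c*x + d)"
definition g :: "real \<Rightarrow> real" where "g x = x^2 - (a*x + b)*x - (c*x + d)"
definition h :: "real \<Rightarrow> real" where "h x = 2*x - (a*x + b)"

lemma four_g_eq: "4 * g x = h x^2 - disc x"
  by (simp add: g_def h_def disc_def power2_eq_square algebra_simps)

lemma lin_rec_W: "lin_rec (\<lambda>n. poly (W a b c d n) x) (a*x + b) (c*x + d)"
  by unfold_locales (fact poly_W_Suc_Suc, simp)

lemma lin_rec_W_alt: "lin_rec (\<lambda>n. (-1)^n * poly (W a b c d n) x) (-(a*x + b)) (c*x + d)"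
  by unfold_locales (simp_all only: poly_W_Suc_Suc, simp_all add: algebra_simps)

lemma W_neg_of_disc_neg: "disc x < 0 \<Longrightarrow> \<exists>n. poly (W a b c d n) x < 0"
  using lin_rec.neg_of_complex_roots[OF lin_rec_W[of x]] by (simp add: disc_def)

lemma W_alt_neg_of_disc_neg: "disc x < 0 \<Longrightarrow> \<exists>n. (-1)^n * poly (W a b c d n) x < 0"
  using lin_rec.neg_of_complex_roots[OF lin_rec_W_alt[of x]] by (simp add: disc_def power2_eq_square algebra_simps)

lemma W_neg_of_real_roots:
  assumes "disc x > 0" "c*x + d < 0" "a*x + b > 0" "h x < 0" "g x > 0"
  shows "\<exists>n. poly (W a b c d n) x < 0"
  using lin_rec.neg_of_real_roots[OF lin_rec_W[of x]] assms by (simp add: disc_def h_def g_def)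

lemma W_alt_neg_of_real_roots:
  assumes "disc x > 0" "c*x + d < 0" "a*x + b < 0" "h x > 0" "g x > 0"
  shows "\<exists>n. (-1)^n * poly (W a b c d n) x < 0"
  using lin_rec.neg_of_real_roots[OF lin_rec_W_alt[of x]] assms
  by (simp add: disc_def h_def g_def power2_eq_square algebra_simps)

lemma W_pos_of_double_root:
  assumes "disc x = 0" "a*x + b > 0" "h x \<ge> 0"
  shows "poly (W a b c d n) x > 0"
proof -
  have "((a*x + b)/2)^2 = (a*x + b) * ((a*x + b)/2) + (c*x + d)"
    using assms(1) by (simp add: disc_def power2_eq_square field_simps)
  then show ?thesis
    by (rule lin_rec.pos_of_root_le[OF lin_rec_W]) (use assms(2,3) in \<open>simp_all add: h_def\<close>)
qed

lemma W_alt_pos_of_double_root: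
  assumes "disc x = 0" "a*x + b < 0" "h x \<le> 0"
  shows "(-1)^n * poly (W a b c d n) x > 0"
proof -
  have "(-(a*x + b)/2)^2 = -(a*x + b) * (-(a*x + b)/2) + (c*x + d)"
    using assms(1) by (simp add: disc_def power2_eq_square field_simps)
  then show ?thesis
    by (rule lin_rec.pos_of_root_le[OF lin_rec_W_alt]) (use assms(2,3) in \<open>simp_all add: h_def\<close>)
qed

lemma W_at_g_root: "g x = 0 \<Longrightarrow> poly (W a b c d n) x = x^n"
  using lin_rec.power_of_root[OF lin_rec_W[of x]] by (simp add: g_def)

end

section \<open>The bounds are barriers\<close>

lemma mult_diff_neg_iff:
  fixes x p q :: real assumes "p \<le> q"
  shows "(x - p) * (x - q) < 0 \<longleftrightarrow> p < x \<and> x < q"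
  using assms by (auto simp: mult_less_0_iff)

lemma mult_diff_pos_iff:
  fixes x p q :: real assumes "p \<le> q"
  shows "(x - p) * (x - q) > 0 \<longleftrightarrow> x < p \<or> q < x"
  using assms by (auto simp: zero_less_mult_iff)

locale W_params = W_coeffs +
  assumes a_pos: "a > 0" and c_pos: "c > 0" and b_neg: "b < 0" and d_neg: "d < 0"
    and xA_less_xB: "xA a b < xB c d"
begin

abbreviation "DD \<equiv> DeltaDelta a b c d"
abbreviation "xm \<equiv> xDelta_minus a b c d"
abbreviation "xp \<equiv> xDelta_plus a b c d"
abbreviation "F \<equiv> Fq a b c d"
abbreviation "Dg \<equiv> Delta_g a b c d"
abbreviation "gm \<equiv> xg_minus a b c d"
abbreviation "gp \<equiv> xg_plus a b c d"

lemma ad_less_bc: "a * d < b * c"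
proof -
  have "-b/a < -d/c" using xA_less_xB by (simp add: xA_def xB_def)
  then have "(-b/a) * (a*c) < (-d/c) * (a*c)" using a_pos c_pos by (intro mult_strict_right_mono) auto
  then show ?thesis using a_pos c_pos by (simp add: field_simps)
qed

lemma DD_eq: "DD = c^2 + a*b*c - a^2*d"
  unfolding DeltaDelta_def xA_def using a_pos by (simp add: field_simps power2_eq_square)

lemma DD_gt: "DD > c^2"
  using mult_pos_pos[OF a_pos, of "b*c - a*d"] ad_less_bc
  unfolding DD_eq by (simp add: algebra_simps power2_eq_square)

lemma sqrt_DD_sq: "(sqrt DD)^2 = DD"
  using DD_gt by (intro real_sqrt_pow2) (smt (verit) zero_le_power2)

lemma sqrt_DD_gt: "sqrt DD > c"
  using DD_gt c_pos by (metis real_less_rsqrt)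

lemma xm_eq: "xm = -b/a - 2*(c + sqrt DD)/a^2"
  unfolding xDelta_minus_def xA_def using a_pos by (simp add: field_simps)

lemma xp_eq: "xp = -b/a + 2*(sqrt DD - c)/a^2"
  unfolding xDelta_plus_def xA_def using a_pos by (simp add: field_simps)

lemma disc_factor: "disc x = a^2 * ((x - xm) * (x - xp))"
proof -
  define p where "p = -b/a - 2*c/a^2"
  define q where "q = 2 * sqrt DD / a^2"
  have xm: "xm = p - q" and xp: "xp = p + q"
    unfolding xm_eq xp_eq p_def q_def using a_pos by (simp_all add: field_simps)
  have "a^2 * ((x - xm) * (x - xp)) = a^2 * ((x - p)^2 - q^2)"
    unfolding xm xp by (simp add: power2_eq_square algebra_simps)
  also have "q^2 = 4 * DD / (a^2)^2"
    unfolding q_def by (simp add: power_divide power_mult_distrib sqrt_DD_sq)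
  also have "a^2 * ((x - p)^2 - 4 * DD / (a^2)^2) = disc x"
    unfolding disc_def p_def DD_eq using a_pos by (simp add: field_simps power2_eq_square)
  finally show ?thesis by simp
qed

lemma xm_less_xp: "xm < xp"
proof -
  have "sqrt DD > 0" using sqrt_DD_gt c_pos by linarith
  then show ?thesis unfolding xm_eq xp_eq using a_pos by (simp add: field_simps)
qed

lemma xp_pos: "xp > 0"
proof -
  have "-b/a > 0" using a_pos b_neg by (simp add: divide_neg_pos)
  moreover have "2*(sqrt DD - c)/a^2 > 0" using sqrt_DD_gt a_pos by simp
  ultimately show ?thesis unfolding xp_eq by simp
qed

lemma A_xp_pos: "a*xp + b > 0"
proof -
  have "a*xp + b = 2*(sqrt DD - c)/a" unfolding xp_eq using a_pos by (simp add: field_simps power2_eq_square)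
  then show ?thesis using sqrt_DD_gt a_pos by simp
qed

lemma A_xm_neg: "a*xm + b < 0"
proof -
  have "a*xm + b = -2*(sqrt DD + c)/a" unfolding xm_eq using a_pos by (simp add: field_simps power2_eq_square)
  then show ?thesis using sqrt_DD_gt a_pos c_pos by (simp add: divide_neg_pos)
qed

lemma disc_xm: "disc xm = 0" and disc_xp: "disc xp = 0"
  by (simp_all add: disc_factor)

lemma B_xp_neg: "c*xp + d < 0"
proof -
  have "(a*xp + b)^2 + 4*(c*xp + d) = 0" using disc_xp by (simp add: disc_def)
  moreover have "(a*xp + b)^2 > 0" using A_xp_pos by simp
  ultimately show ?thesis by (smt (verit))
qed

lemma disc_neg_iff: "disc x < 0 \<longleftrightarrow> xm < x \<and> x < xp"
  unfolding disc_factor using a_pos mult_diff_neg_iff[OF less_imp_le[OF xm_less_xp]]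
  by (simp add: mult_less_0_iff)

lemma disc_pos_iff: "disc x > 0 \<longleftrightarrow> x < xm \<or> xp < x"
  unfolding disc_factor using a_pos mult_diff_pos_iff[OF less_imp_le[OF xm_less_xp]]
  by (simp add: zero_less_mult_iff)

lemma F_eq: "F = d*(a-2)^2 + b*c*(2-a) + b^2"
  unfolding Fq_def Delta_g_def DD_eq by (simp add: power2_eq_square algebra_simps)

text \<open>\<open>b/(2-a)\<close> is the zero of \<open>h\<close>; there \<open>4 g = -disc\<close> by \<open>four_g_eq\<close>, and the sign of both is
  governed by \<open>F\<close>. This is how \<open>F\<close> decides between the cases of the bounds.\<close>
lemma h_eq: "a \<noteq> 2 \<Longrightarrow> h x = (2-a) * (x - b/(2-a))"
  unfolding h_def by (simp add: field_simps)

lemma disc_vertex: "a \<noteq> 2 \<Longrightarrow> disc (b/(2-a)) = 4 * F / (2-a)^2"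
proof -
  assume "a \<noteq> 2"
  define k where "k = 2 - a"
  have "k \<noteq> 0" and a: "a = 2 - k" using \<open>a \<noteq> 2\<close> by (simp_all add: k_def)
  then have "a*(b/k) + b = 2*b/k" unfolding a by (simp add: field_simps)
  then have "disc (b/k) = (2*b/k)^2 + 4*(c*(b/k) + d)" by (simp add: disc_def)
  also have "\<dots> = 4*(b^2 + c*b*k + d*k^2) / k^2" using \<open>k \<noteq> 0\<close> by (simp add: field_simps power2_eq_square)
  also have "b^2 + c*b*k + d*k^2 = F" unfolding F_eq k_def by (simp add: power2_eq_square algebra_simps)
  finally show ?thesis by (simp add: k_def)
qed

lemma g_vertex: "a \<noteq> 2 \<Longrightarrow> g (b/(2-a)) = - F / (2-a)^2"
  using four_g_eq[of "b/(2-a)"] h_eq[of "b/(2-a)"] disc_vertex by simp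

lemma disc_vertex_sign:
  assumes "a \<noteq> 2"
  shows "disc (b/(2-a)) > 0 \<longleftrightarrow> F > 0" and "disc (b/(2-a)) < 0 \<longleftrightarrow> F < 0"
  using assms by (simp_all add: disc_vertex zero_less_divide_iff divide_less_0_iff)

lemma g_vertex_neg: "a \<noteq> 2 \<Longrightarrow> g (b/(2-a)) < 0 \<longleftrightarrow> F > 0"
  by (simp add: g_vertex divide_less_0_iff zero_less_divide_iff)

lemma g_0_pos: "g 0 > 0"
  using d_neg by (simp add: g_def)

lemma g_factor:
  assumes "a \<noteq> 1" and "Dg \<ge> 0"
  shows "g x = (1-a) * ((x - gm) * (x - gp))" and "gm \<le> gp"
proof -
  define p where "p = (b+c)/(2*(1-a))"
  define q where "q = sqrt Dg / (2*\<bar>1-a\<bar>)"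
  have gm: "gm = p - q" and gp: "gp = p + q"
    unfolding xg_minus_def xg_plus_def p_def q_def using \<open>a \<noteq> 1\<close> by simp_all
  show "gm \<le> gp" unfolding gm gp using \<open>Dg \<ge> 0\<close> by (simp add: q_def)
  have k: "1 - a \<noteq> 0" using \<open>a \<noteq> 1\<close> by simp
  have q2: "q^2 = Dg / (4*(1-a)^2)" using \<open>Dg \<ge> 0\<close> by (simp add: q_def power_divide power_mult_distrib)
  have "(1-a) * ((x - gm) * (x - gp)) = (1-a)*x^2 - 2*x*((1-a)*p) + (1-a)*(p^2 - q^2)"
    unfolding gm gp by (simp add: power2_eq_square algebra_simps)
  also have "(1-a)*p = (b+c)/2" unfolding p_def using k by (simp add: field_simps)
  also have "(1-a)*(p^2 - q^2) = -d"
  proof -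
    have "p^2 - q^2 = ((b+c)^2 - Dg) / (4*(1-a)^2)"
      unfolding q2 p_def by (simp add: power_divide power_mult_distrib diff_divide_distrib power2_eq_square algebra_simps)
    also have "(b+c)^2 - Dg = -4*d*(1-a)" by (simp add: Delta_g_def)
    finally have "(1-a)*(p^2 - q^2) = ((1-a)*(-4*d*(1-a))) / (4*(1-a)^2)" by simp
    also have "(1-a)*(-4*d*(1-a)) = -d*(4*(1-a)^2)" by (simp add: power2_eq_square algebra_simps)
    finally show ?thesis using k by simp
  qed
  also have "(1-a)*x^2 - 2*x*((b+c)/2) + -d = g x" by (simp add: g_def power2_eq_square algebra_simps)
  finally show "g x = (1-a) * ((x - gm) * (x - gp))" by simp
qed

lemma Dg_nonneg_if_a_gt_1: "a > 1 \<Longrightarrow> Dg \<ge> 0"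
  unfolding Delta_g_def using d_neg by (smt (verit) mult_neg_neg zero_le_power2)

lemma Dg_nonneg_if_F_pos: "F > 0 \<Longrightarrow> Dg \<ge> 0"
  using sqrt_DD_gt c_pos unfolding Fq_def by (smt (verit) real_sqrt_less_mono real_sqrt_zero)

lemma g_pos_iff_concave: "a > 1 \<Longrightarrow> g x > 0 \<longleftrightarrow> gm < x \<and> x < gp"
  using g_factor[OF _ Dg_nonneg_if_a_gt_1] mult_diff_neg_iff[of gm gp x]
  by (simp add: zero_less_mult_iff mult_less_0_iff)

lemma g_sign_convex:
  assumes "a < 1" "F > 0"
  shows "g x < 0 \<longleftrightarrow> gm < x \<and> x < gp" and "g x > 0 \<longleftrightarrow> x < gm \<or> gp < x"
  using g_factor[OF _ Dg_nonneg_if_F_pos] mult_diff_neg_iff[of gm gp x] mult_diff_pos_iff[of gm gp x] assms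
  by (simp_all add: zero_less_mult_iff mult_less_0_iff)

lemma g_xg_minus: "a \<noteq> 1 \<Longrightarrow> Dg \<ge> 0 \<Longrightarrow> g gm = 0"
  using g_factor(1)[of gm] by simp

lemma g_xg_plus: "a \<noteq> 1 \<Longrightarrow> Dg \<ge> 0 \<Longrightarrow> g gp = 0"
  using g_factor(1)[of gp] by simp

definition upper_barrier :: "real \<Rightarrow> bool" where
  "upper_barrier v \<longleftrightarrow> 0 < v \<and> c * v + d < 0 \<and> (\<forall>n. poly (W a b c d n) v > 0)
     \<and> (\<forall>\<epsilon>>0. \<exists>x n. v - \<epsilon> < x \<and> x < v \<and> poly (W a b c d n) x < 0)"

definition lower_barrier :: "real \<Rightarrow> bool" where
  "lower_barrier u \<longleftrightarrow> u < 0 \<and> (\<forall>n. (-1)^n * poly (W a b c d n) u > 0)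
     \<and> (\<forall>\<epsilon>>0. \<exists>x n. u < x \<and> x < u + \<epsilon> \<and> (-1)^n * poly (W a b c d n) x < 0)"

lemma upper_barrier_xp:
  assumes "h xp \<ge> 0" shows "upper_barrier xp"
  unfolding upper_barrier_def
proof (intro conjI allI impI)
  show "0 < xp" "c*xp + d < 0" by (fact xp_pos, fact B_xp_neg)
  show "poly (W a b c d n) xp > 0" for n by (rule W_pos_of_double_root[OF disc_xp A_xp_pos assms])
  fix \<epsilon> :: real assume "\<epsilon> > 0"
  obtain x where x: "max xm (xp - \<epsilon>) < x" "x < xp"
    using dense[of "max xm (xp - \<epsilon>)" xp] xm_less_xp \<open>\<epsilon> > 0\<close> by auto
  then obtain n where "poly (W a b c d n) x < 0" using W_neg_of_disc_neg disc_neg_iff by auto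
  then show "\<exists>x n. xp - \<epsilon> < x \<and> x < xp \<and> poly (W a b c d n) x < 0" using x by auto
qed

lemma upper_barrier_g_root:
  assumes "g v = 0" "xp < v" "c * v + d < 0"
    and g_h: "\<And>x. xp < x \<Longrightarrow> x < v \<Longrightarrow> g x > 0 \<and> h x < 0"
  shows "upper_barrier v"
  unfolding upper_barrier_def
proof (intro conjI allI impI)
  show "0 < v" "c * v + d < 0" using xp_pos assms(2,3) by simp_all
  then show "poly (W a b c d n) v > 0" for n using W_at_g_root[OF \<open>g v = 0\<close>] by simp
  fix \<epsilon> :: real assume "\<epsilon> > 0"
  obtain x where x: "max xp (v - \<epsilon>) < x" "x < v"
    using dense[of "max xp (v - \<epsilon>)" v] \<open>xp < v\<close> \<open>\<epsilon> > 0\<close> by auto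
  have "c*x + d < 0" using x \<open>c * v + d < 0\<close> c_pos by (smt (verit) mult_strict_left_mono)
  moreover have "a*x + b > 0" using x A_xp_pos a_pos by (smt (verit) mult_strict_left_mono)
  ultimately obtain n where "poly (W a b c d n) x < 0"
    using W_neg_of_real_roots[of x] disc_pos_iff[of x] g_h[of x] x by auto
  then show "\<exists>x n. v - \<epsilon> < x \<and> x < v \<and> poly (W a b c d n) x < 0" using x by auto
qed

lemma lower_barrier_xm:
  assumes "h xm \<le> 0" "xm < 0" shows "lower_barrier xm"
  unfolding lower_barrier_def
proof (intro conjI allI impI)
  show "xm < 0" by fact
  show "(-1)^n * poly (W a b c d n) xm > 0" for n
    by (rule W_alt_pos_of_double_root[OF disc_xm A_xm_neg assms(1)])
  fix \<epsilon> :: real assume "\<epsilon> > 0"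
  obtain x where x: "xm < x" "x < min xp (xm + \<epsilon>)"
    using dense[of xm "min xp (xm + \<epsilon>)"] xm_less_xp \<open>\<epsilon> > 0\<close> by auto
  then obtain n where "(-1)^n * poly (W a b c d n) x < 0" using W_alt_neg_of_disc_neg disc_neg_iff by auto
  then show "\<exists>x n. xm < x \<and> x < xm + \<epsilon> \<and> (-1)^n * poly (W a b c d n) x < 0" using x by auto
qed

lemma lower_barrier_g_root:
  assumes "g u = 0" "u < 0" "u < xm"
    and g_h: "\<And>x. u < x \<Longrightarrow> x < xm \<Longrightarrow> g x > 0 \<and> h x > 0"
  shows "lower_barrier u"
  unfolding lower_barrier_def
proof (intro conjI allI impI)
  show "u < 0" by fact
  show "(-1)^n * poly (W a b c d n) u > 0" for n
    using W_at_g_root[OF \<open>g u = 0\<close>] \<open>u < 0\<close> by (simp add: power_minus[symmetric])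
  fix \<epsilon> :: real assume "\<epsilon> > 0"
  obtain x where x: "u < x" "x < min xm (u + \<epsilon>)"
    using dense[of u "min xm (u + \<epsilon>)"] \<open>u < xm\<close> \<open>\<epsilon> > 0\<close> by auto
  have "c*x + d < 0" using x xm_less_xp B_xp_neg c_pos by (smt (verit) mult_strict_left_mono)
  moreover have "a*x + b < 0" using x A_xm_neg a_pos by (smt (verit) mult_strict_left_mono)
  ultimately obtain n where "(-1)^n * poly (W a b c d n) x < 0"
    using W_alt_neg_of_real_roots[of x] disc_pos_iff[of x] g_h[of x] x by auto
  then show "\<exists>x n. u < x \<and> x < u + \<epsilon> \<and> (-1)^n * poly (W a b c d n) x < 0" using x by auto
qed

lemma B_at_g_root: "g y = 0 \<Longrightarrow> c*y + d = y * (h y - y)"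
  unfolding g_def h_def by (simp add: power2_eq_square algebra_simps)

lemma h_xp_nonneg: "a \<le> 2 \<Longrightarrow> h xp \<ge> 0"
proof -
  assume "a \<le> 2"
  then have "(2 - a) * xp \<ge> 0" using xp_pos by simp
  then show ?thesis unfolding h_def using b_neg by (simp add: algebra_simps)
qed

lemma g_pos_of_h_nonzero: "disc x = 0 \<Longrightarrow> h x \<noteq> 0 \<Longrightarrow> g x > 0"
  using four_g_eq[of x] by (smt (verit) zero_less_power2)

lemma barriers_xDelta:
  assumes "a < 2" "F \<le> 0" shows "lower_barrier xm" "upper_barrier xp"
proof -
  show "upper_barrier xp" using upper_barrier_xp h_xp_nonneg assms by simp
  have "a \<noteq> 2" using assms by simp
  define x0 where "x0 = b/(2-a)"
  have "\<not> disc x0 > 0" using disc_vertex_sign(1)[OF \<open>a \<noteq> 2\<close>] assms by (simp add: x0_def)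
  then have "xm \<le> x0" using disc_pos_iff[of x0] by linarith
  moreover have "x0 < 0" using assms b_neg by (simp add: x0_def divide_neg_pos)
  moreover have "h xm = (2-a) * (xm - x0)" using h_eq[OF \<open>a \<noteq> 2\<close>] by (simp add: x0_def)
  ultimately have "h xm \<le> 0" "xm < 0" using assms by (simp_all add: mult_nonneg_nonpos)
  then show "lower_barrier xm" by (rule lower_barrier_xm)
qed

lemma barriers_xg:
  assumes "a > 2" "F < 0" shows "lower_barrier gm" "upper_barrier gp"
proof -
  have "a \<noteq> 2" "a \<noteq> 1" "Dg \<ge> 0" using assms Dg_nonneg_if_a_gt_1 by simp_all
  define x0 where "x0 = b/(2-a)"
  have h: "h x = (2-a) * (x - x0)" for x using h_eq[OF \<open>a \<noteq> 2\<close>] by (simp add: x0_def)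
  have "disc x0 < 0" using disc_vertex_sign(2)[OF \<open>a \<noteq> 2\<close>] assms by (simp add: x0_def)
  then have x0: "xm < x0" "x0 < xp" using disc_neg_iff by auto
  have g: "g x > 0 \<longleftrightarrow> gm < x \<and> x < gp" for x using g_pos_iff_concave \<open>a > 2\<close> by simp
  have "g xp > 0" "g xm > 0"
    using g_pos_of_h_nonzero disc_xp disc_xm h x0 \<open>a > 2\<close> by auto
  then have order: "gm < xm" "xp < gp" "gm < 0" "0 < gp" using g g_0_pos by auto
  show "upper_barrier gp"
  proof (rule upper_barrier_g_root)
    show "g gp = 0" using g_xg_plus \<open>a \<noteq> 1\<close> \<open>Dg \<ge> 0\<close> .
    have "h gp < 0" using h x0 order \<open>a > 2\<close> by (simp add: mult_neg_pos)
    then show "c * gp + d < 0" unfolding B_at_g_root[OF \<open>g gp = 0\<close>] using order by (simp add: mult_pos_neg)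
    show "xp < gp" by (fact order)
    show "g x > 0 \<and> h x < 0" if "xp < x" "x < gp" for x
      using that g order x0 h \<open>a > 2\<close> xm_less_xp by (simp add: mult_neg_pos)
  qed
  show "lower_barrier gm"
  proof (rule lower_barrier_g_root)
    show "g gm = 0" using g_xg_minus \<open>a \<noteq> 1\<close> \<open>Dg \<ge> 0\<close> .
    show "gm < 0" "gm < xm" by (fact order)+
    show "g x > 0 \<and> h x > 0" if "gm < x" "x < xm" for x
      using that g order x0 h \<open>a > 2\<close> xm_less_xp by (simp add: mult_neg_neg)
  qed
qed

lemma barriers_xg_plus_xDelta_plus:
  assumes "a < 1" "F > 0" shows "lower_barrier gp" "upper_barrier xp"
proof -
  show "upper_barrier xp" using upper_barrier_xp h_xp_nonneg assms by simp
  have "a \<noteq> 2" "a \<noteq> 1" "Dg \<ge> 0" using assms Dg_nonneg_if_F_pos by simp_all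
  define x0 where "x0 = b/(2-a)"
  have h: "h x = (2-a) * (x - x0)" for x using h_eq[OF \<open>a \<noteq> 2\<close>] by (simp add: x0_def)
  have "x0 < 0" using assms b_neg by (simp add: x0_def divide_neg_pos)
  have "g x0 < 0" using g_vertex_neg[OF \<open>a \<noteq> 2\<close>] assms by (simp add: x0_def)
  then have x0_g: "gm < x0" "x0 < gp" using g_sign_convex(1)[OF assms] by auto
  have "gp < 0" using g_sign_convex(2)[OF assms, of 0] g_0_pos x0_g \<open>x0 < 0\<close> by auto
  have "disc x0 > 0" using disc_vertex_sign(1)[OF \<open>a \<noteq> 2\<close>] assms by (simp add: x0_def)
  then have "x0 < xm" using disc_pos_iff[of x0] \<open>x0 < 0\<close> xp_pos by auto
  then have "g xm > 0" using g_pos_of_h_nonzero disc_xm h assms by simp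
  then have "gp < xm" using g_sign_convex(2)[OF assms] x0_g \<open>x0 < xm\<close> by auto
  show "lower_barrier gp"
  proof (rule lower_barrier_g_root)
    show "g gp = 0" using g_xg_plus \<open>a \<noteq> 1\<close> \<open>Dg \<ge> 0\<close> .
    show "gp < 0" "gp < xm" by fact+
    show "g x > 0 \<and> h x > 0" if "gp < x" "x < xm" for x
      using that g_sign_convex(2)[OF assms, of x] x0_g h assms by simp
  qed
qed

lemma h_pos_of_a_gt_1:
  assumes "a > 1" and F_pos: "a < 2 \<Longrightarrow> F > 0"
  shows "h xm > 0 \<and> (\<forall>x. gm < x \<longrightarrow> x < xm \<longrightarrow> h x > 0)"
proof -
  consider "a < 2" | "a = 2" | "a > 2" by linarith
  then show ?thesis
  proof cases
    case 1
    then have "a \<noteq> 2" "F > 0" using F_pos by auto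
    define x0 where "x0 = b/(2-a)"
    have h: "h x = (2-a) * (x - x0)" for x using h_eq[OF \<open>a \<noteq> 2\<close>] by (simp add: x0_def)
    have "x0 < 0" using 1 b_neg by (simp add: x0_def divide_neg_pos)
    have "disc x0 > 0" using disc_vertex_sign(1)[OF \<open>a \<noteq> 2\<close>] \<open>F > 0\<close> by (simp add: x0_def)
    then have "x0 < xm" using disc_pos_iff[of x0] \<open>x0 < 0\<close> xp_pos by auto
    have "g x0 < 0" using g_vertex_neg[OF \<open>a \<noteq> 2\<close>] \<open>F > 0\<close> by (simp add: x0_def)
    moreover have "0 < gp" using g_pos_iff_concave[of 0] g_0_pos \<open>a > 1\<close> by simp
    ultimately have "x0 \<le> gm" using g_pos_iff_concave[of x0] \<open>a > 1\<close> \<open>x0 < 0\<close> by auto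
    then show ?thesis unfolding h using \<open>x0 < xm\<close> 1 by simp
  next
    case 2
    then have "h x = -b" for x unfolding h_def by simp
    then show ?thesis using b_neg by simp
  next
    case 3
    then have "a \<noteq> 2" by simp
    define x0 where "x0 = b/(2-a)"
    have h: "h x = (2-a) * (x - x0)" for x using h_eq[OF \<open>a \<noteq> 2\<close>] by (simp add: x0_def)
    have "x0 > 0" using 3 b_neg by (simp add: x0_def divide_neg_neg)
    then have "a*xm + b < a*x0 + b" using h[of x0] A_xm_neg by (simp add: h_def)
    then have "xm < x0" using a_pos by simp
    then show ?thesis unfolding h using 3 by (auto simp: mult_neg_neg)
  qed
qed

lemma lower_barrier_gm_of_a_gt_1:
  assumes "a > 1" and "a < 2 \<Longrightarrow> F > 0" shows "lower_barrier gm"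
proof -
  have "a \<noteq> 1" "Dg \<ge> 0" using assms Dg_nonneg_if_a_gt_1 by simp_all
  have g: "g x > 0 \<longleftrightarrow> gm < x \<and> x < gp" for x using g_pos_iff_concave \<open>a > 1\<close> by simp
  note h_pos = h_pos_of_a_gt_1[OF assms]
  then have "g xm > 0" using g_pos_of_h_nonzero disc_xm by auto
  then have "gm < xm" "xm < gp" using g by simp_all
  show ?thesis
  proof (rule lower_barrier_g_root)
    show "g gm = 0" using g_xg_minus \<open>a \<noteq> 1\<close> \<open>Dg \<ge> 0\<close> .
    show "gm < 0" using g[of 0] g_0_pos by simp
    show "gm < xm" by fact
    show "g x > 0 \<and> h x > 0" if "gm < x" "x < xm" for x
      using that g[of x] h_pos \<open>xm < gp\<close> by auto
  qed
qed

text \<open>For \<open>a = 1\<close> the function \<open>g\<close> is linear and \<open>xg_minus\<close> is its only zero.\<close>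
lemma lower_barrier_gm_of_a_eq_1:
  assumes "a = 1" "F > 0" shows "lower_barrier gm"
proof -
  have "F = d + b*(b + c)" using F_eq \<open>a = 1\<close> by (simp add: power2_eq_square algebra_simps)
  then have "b * (b + c) > 0" using \<open>F > 0\<close> d_neg by linarith
  then have "b + c < 0" using b_neg by (simp add: zero_less_mult_iff)
  have gm: "gm = -d/(b + c)" unfolding xg_minus_def using \<open>a = 1\<close> by simp
  have g: "g x = -(b + c) * (x - gm)" for x
    unfolding gm g_def using \<open>b + c < 0\<close> \<open>a = 1\<close> by (simp add: field_simps power2_eq_square)
  have h: "h x = x - b" for x unfolding h_def using \<open>a = 1\<close> by simp
  have "g b < 0" using g_vertex_neg \<open>F > 0\<close> \<open>a = 1\<close> by simp
  then have "b < gm" unfolding g using \<open>b + c < 0\<close> by (simp add: mult_less_0_iff)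
  have "disc b > 0" using disc_vertex_sign(1) \<open>F > 0\<close> \<open>a = 1\<close> by simp
  then have "b < xm" using disc_pos_iff[of b] b_neg xp_pos by auto
  then have "g xm > 0" using g_pos_of_h_nonzero disc_xm h by simp
  show ?thesis
  proof (rule lower_barrier_g_root)
    show "g gm = 0" using g by simp
    show "gm < 0" unfolding gm using \<open>b + c < 0\<close> d_neg by (simp add: divide_neg_neg)
    show "gm < xm" using \<open>g xm > 0\<close> \<open>b + c < 0\<close> unfolding g by (simp add: zero_less_mult_iff)
    show "g x > 0 \<and> h x > 0" if "gm < x" "x < xm" for x
      unfolding g h using that \<open>b + c < 0\<close> \<open>b < gm\<close> by (simp add: mult_pos_pos)
  qed
qed

lemma barriers_xg_minus_xDelta_plus:
  assumes "\<not> (a < 2 \<and> F \<le> 0)" "\<not> (a > 2 \<and> F < 0)" "\<not> (a < 1 \<and> F > 0)"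
  shows "lower_barrier gm" "upper_barrier xp"
proof -
  have "h xp \<ge> 0"
  proof (cases "a \<le> 2")
    case False
    then have "a \<noteq> 2" "F \<ge> 0" using assms(2) by auto
    define x0 where "x0 = b/(2-a)"
    have h: "h x = (2-a) * (x - x0)" for x using h_eq[OF \<open>a \<noteq> 2\<close>] by (simp add: x0_def)
    have "x0 > 0" using False b_neg by (simp add: x0_def divide_neg_neg)
    then have "a*xm + b < a*x0 + b" using h[of x0] A_xm_neg by (simp add: h_def)
    then have "xm < x0" using a_pos by simp
    moreover have "\<not> disc x0 < 0" using disc_vertex_sign(2)[OF \<open>a \<noteq> 2\<close>] \<open>F \<ge> 0\<close> by (simp add: x0_def)
    ultimately have "xp \<le> x0" using disc_neg_iff[of x0] by linarith
    then show ?thesis unfolding h using False by (simp add: mult_nonpos_nonpos)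
  qed (rule h_xp_nonneg)
  then show "upper_barrier xp" by (rule upper_barrier_xp)
  show "lower_barrier gm"
  proof (cases "a = 1")
    case True
    then show ?thesis using assms(1) by (intro lower_barrier_gm_of_a_eq_1) auto
  next
    case False
    then show ?thesis using assms(1,3) by (intro lower_barrier_gm_of_a_gt_1) auto
  qed
qed

lemma barriers_bounds: "lower_barrier (bound_u a b c d) \<and> upper_barrier (bound_v a b c d)"
proof (cases "a < 2 \<and> F \<le> 0")
  case True
  then show ?thesis using barriers_xDelta by (simp add: bound_u_def bound_v_def)
next
  case out1: False
  show ?thesis
  proof (cases "a > 2 \<and> F < 0")
    case True
    then show ?thesis using barriers_xg out1 by (simp add: bound_u_def bound_v_def)
  next
    case out2: False
    show ?thesis
    proof (cases "a < 1 \<and> F > 0")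
      case True
      then show ?thesis using barriers_xg_plus_xDelta_plus out1 out2 by (simp add: bound_u_def bound_v_def)
    next
      case False
      then show ?thesis
        using barriers_xg_minus_xDelta_plus[OF out1 out2 False] out1 out2 False
        by (auto simp: bound_u_def bound_v_def)
    qed
  qed
qed

lemma W_barriers_of_barriers:
  assumes "lower_barrier u" "upper_barrier v" shows "W_barriers a b c d u v"
proof
  show "u < 0" "0 < v" "poly (W a b c d n) v > 0" "(-1)^n * poly (W a b c d n) u > 0" for n
    using assms by (auto simp: lower_barrier_def upper_barrier_def)
  show "c * x + d < 0" if "x < v" for x
  proof -
    have "c * x < c * v" using that c_pos by simp
    then show ?thesis using assms(2) by (simp add: upper_barrier_def)
  qed
qed

end

theorem theorem3p4:
  fixes a b c d :: real
  assumes "a > 0" and "c > 0" and "b < 0" and "d < 0"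
    and "xA a b < xB c d"
  shows "(\<forall>n. (\<forall>z::complex. poly (map_poly of_real (W a b c d n)) z = 0 \<longrightarrow> z \<in> \<real>)
            \<and> W a b c d n \<noteq> 0 \<and> degree (W a b c d n) = n
            \<and> card {x. poly (W a b c d n) x = 0} = n
            \<and> {x. poly (W a b c d n) x = 0} \<subseteq> {bound_u a b c d <..< bound_v a b c d}
            \<and> strictly_interlaces {x. poly (W a b c d (Suc n)) x = 0} {x. poly (W a b c d n) x = 0})
         \<and> limit_of_zeros (W a b c d) (bound_u a b c d)
         \<and> limit_of_zeros (W a b c d) (bound_v a b c d)"
proof -
  interpret W_params a b c d using assms by unfold_locales
  have lower: "lower_barrier (bound_u a b c d)" and upper: "upper_barrier (bound_v a b c d)"
    using barriers_bounds by auto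
  interpret W_barriers a b c d "bound_u a b c d" "bound_v a b c d"
    using W_barriers_of_barriers[OF lower upper] .
  have "limit_of_zeros (W a b c d) (bound_u a b c d)"
    using lower unfolding lower_barrier_def by (intro limit_of_zeros_u) auto
  moreover have "limit_of_zeros (W a b c d) (bound_v a b c d)"
    using upper unfolding upper_barrier_def by (intro limit_of_zeros_v) auto
  ultimately show ?thesis using W_real_rooted_interlacing by blast
qed

end
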